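(* For every $y_0\in Y$ and every $\theta\ge0$, $$\bar d^*(\theta,y_0)=d^*(\theta,y_0)\le k^*(\theta,y_0).$$
   Context: Let $Y\subset\mathbb{R}^m$ be nonempty compact, $U_0$ a compact metric space, $U(\cdot):Y\rightsquigarrow U_0$ upper semicontinuous and compact-valued, and $f:\mathbb{R}^m\times U_0\to\mathbb{R}^m$, $k:\mathbb{R}^m\times U_0\to\mathbb{R}$ continuous. Put $A(y):=\{u\in U(y): f(y,u)\in Y\}$ and $G:=\{(y,u):y\in Y,\ u\in A(y)\}$. Standing assumption: $A(y)\ne\emptyset$ for all $y\in Y$. Measure spaces: - $\mathcal P(G)$ denotes the Borel probability measures on $G$ and $\mathcal M_+(G)$ the finite nonnegative Borel measures on $G$. - $W:=\{\gamma\in\mathcal P(G):\int_G(\varphi(f(y,u))-\varphi(y))\,d\gamma=0\ \forall\varphi\in C(Y)\}$. - $\Omega(y_0)$ is the set of $(\gamma,\xi)\in\mathcal P(G)\times\mathcal M_+(G)$ with $\gamma\in W$ and $\int_G(\varphi(y_0)-\varphi(y))\,\gamma(dy,du)+\int_G(\varphi(f(y,u))-\varphi(y))\,\xi(dy,du)=0$ for all $\varphi\in C(Y)$. Perturbed problems, for $\theta\ge0$: - $k^*(\theta,y_0):=\inf_{(\gamma,\xi)\in\Omega(y_0)}\left\{\int_Gk(y,u)\,\gamma(dy,du)+\theta\,\xi(G)\right\}$. - $d^*(\theta,y_0):=\sup\mu$, over triples $(\mu,\psi,\eta)\in\mathbb{R}\times C(Y)\times C(Y)$ such that for all $(y,u)\in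 G$: $$k(y,u)+\psi(y_0)-\psi(y)+\eta(f(y,u))-\eta(y)-\mu\ge0,\qquad\psi(f(y,u))-\psi(y)\ge-\theta.$$ - $\bar d^*(\theta,y_0):=\sup\psi(y_0)$, over pairs $(\psi,\eta)\in C(Y)\times C(Y)$ such that for all $(y,u)\in G$: $$k(y,u)-\psi(y)+\eta(f(y,u))-\eta(y)\ge0,\qquad\psi(f(y,u))-\psi(y)\ge-\theta.$$ *)

theory Defs
  imports "HOL-Probability.Probability"
begin

definition usc_setvalued_on :: "'a::metric_space set \<Rightarrow> ('a \<Rightarrow> 'b::topological_space set) \<Rightarrow> bool" where
  "usc_setvalued_on Y U \<longleftrightarrow>
     (\<forall>y\<in>Y. \<forall>V. open V \<and> U y \<subseteq> V \<longrightarrow>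
        (\<exists>\<delta>>0. \<forall>y'\<in>Y. dist y' y < \<delta> \<longrightarrow> U y' \<subseteq> V))"

definition Aset :: "'a set \<Rightarrow> ('a \<Rightarrow> 'b set) \<Rightarrow> ('a \<times> 'b \<Rightarrow> 'a) \<Rightarrow> 'a \<Rightarrow> 'b set" where
  "Aset Y U f y = {u \<in> U y. f (y, u) \<in> Y}"

definition Gset :: "'a set \<Rightarrow> ('a \<Rightarrow> 'b set) \<Rightarrow> ('a \<times> 'b \<Rightarrow> 'a) \<Rightarrow> ('a \<times> 'b) set" where
  "Gset Y U f = {(y, u). y \<in> Y \<and> u \<in> Aset Y U f y}"

definition borel_prob_on :: "('c::topological_space) set \<Rightarrow> 'c measure \<Rightarrow> bool" where
  "borel_prob_on S M \<longleftrightarrow> sets M = sets (restrict_space borel S) \<and> prob_space M"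

definition borel_finite_on :: "('c::topological_space) set \<Rightarrow> 'c measure \<Rightarrow> bool" where
  "borel_finite_on S M \<longleftrightarrow> sets M = sets (restrict_space borel S) \<and> finite_measure M"

definition Wset :: "('a::euclidean_space) set \<Rightarrow> ('a \<Rightarrow> 'b::metric_space set) \<Rightarrow> ('a \<times> 'b \<Rightarrow> 'a)
    \<Rightarrow> ('a \<times> 'b) measure set" where
  "Wset Y U f = {\<gamma>. borel_prob_on (Gset Y U f) \<gamma> \<and>
      (\<forall>\<phi>::'a \<Rightarrow> real. continuous_on Y \<phi> \<longrightarrow>
         integral\<^sup>L \<gamma> (\<lambda>(y, u). \<phi> (f (y, u)) - \<phi> y) = 0)}"

definition Omega :: "('a::euclidean_space) set \<Rightarrow> ('a \<Rightarrow> 'b::metric_space set) \<Rightarrow> ('a \<times> 'b \<Rightarrow> 'a)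
    \<Rightarrow> 'a \<Rightarrow> (('a \<times> 'b) measure \<times> ('a \<times> 'b) measure) set" where
  "Omega Y U f y0 = {(\<gamma>, \<xi>). \<gamma> \<in> Wset Y U f \<and> borel_finite_on (Gset Y U f) \<xi> \<and>
      (\<forall>\<phi>::'a \<Rightarrow> real. continuous_on Y \<phi> \<longrightarrow>
         integral\<^sup>L \<gamma> (\<lambda>(y, u). \<phi> y0 - \<phi> y)
         + integral\<^sup>L \<xi> (\<lambda>(y, u). \<phi> (f (y, u)) - \<phi> y) = 0)}"

text \<open>Values are taken in the extended reals (inf of the empty set = +\<infinity>, etc.).\<close>
definition kstar :: "('a::euclidean_space) set \<Rightarrow> ('a \<Rightarrow> 'b::metric_space set) \<Rightarrow> ('a \<times> 'b \<Rightarrow> 'a)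
    \<Rightarrow> ('a \<times> 'b \<Rightarrow> real) \<Rightarrow> real \<Rightarrow> 'a \<Rightarrow> ereal" where
  "kstar Y U f k \<theta> y0 = (INF p \<in> Omega Y U f y0.
      ereal (integral\<^sup>L (fst p) k + \<theta> * measure (snd p) (Gset Y U f)))"

definition dstar :: "('a::euclidean_space) set \<Rightarrow> ('a \<Rightarrow> 'b::metric_space set) \<Rightarrow> ('a \<times> 'b \<Rightarrow> 'a)
    \<Rightarrow> ('a \<times> 'b \<Rightarrow> real) \<Rightarrow> real \<Rightarrow> 'a \<Rightarrow> ereal" where
  "dstar Y U f k \<theta> y0 = Sup {ereal \<mu> | \<mu>. \<exists>\<psi> \<eta> :: 'a \<Rightarrow> real.
      continuous_on Y \<psi> \<and> continuous_on Y \<eta> \<and>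
      (\<forall>(y, u) \<in> Gset Y U f.
         k (y, u) + \<psi> y0 - \<psi> y + \<eta> (f (y, u)) - \<eta> y - \<mu> \<ge> 0 \<and>
         \<psi> (f (y, u)) - \<psi> y \<ge> - \<theta>)}"

definition dbarstar :: "('a::euclidean_space) set \<Rightarrow> ('a \<Rightarrow> 'b::metric_space set) \<Rightarrow> ('a \<times> 'b \<Rightarrow> 'a)
    \<Rightarrow> ('a \<times> 'b \<Rightarrow> real) \<Rightarrow> real \<Rightarrow> 'a \<Rightarrow> ereal" where
  "dbarstar Y U f k \<theta> y0 = Sup {ereal (\<psi> y0) | \<psi>. \<exists>\<eta> :: 'a \<Rightarrow> real.
      continuous_on Y \<psi> \<and> continuous_on Y \<eta> \<and>
      (\<forall>(y, u) \<in> Gset Y U f.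
         k (y, u) - \<psi> y + \<eta> (f (y, u)) - \<eta> y \<ge> 0 \<and>
         \<psi> (f (y, u)) - \<psi> y \<ge> - \<theta>)}"

end

theory Submission
  imports Defs
begin

text \<open>The two dual problems differ only by the normalisation \<open>\<psi> \<mapsto> \<psi> - \<psi> y\<^sub>0 + \<mu>\<close>, which
turns a feasible triple \<open>(\<mu>, \<psi>, \<eta>)\<close> of \<open>d\<^sup>*\<close> into a feasible pair of \<open>d\<^sup>*\<close>-bar with
\<open>\<psi> y\<^sub>0 = \<mu>\<close>, and back.  Weak duality \<open>d\<^sup>* \<le> k\<^sup>*\<close> comes from integrating the first dual
constraint against \<open>\<gamma>\<close> and the second against \<open>\<xi>\<close>: the \<open>\<eta>\<close>-terms vanish because
\<open>\<gamma> \<in> W\<close>, and the \<open>\<psi>\<close>-terms are linked by the identity defining \<open>\<Omega>(y\<^sub>0)\<close>.  The test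
functions only need to be integrable, which holds because they are continuous on \<open>G\<close> with
bounded range (\<open>Y\<close> and \<open>Y \<times> U\<^sub>0\<close> are compact).\<close>

lemma integrable_continuous_on_bounded:
  fixes h :: "'c::topological_space \<Rightarrow> real"
  assumes "finite_measure M" and sets_M: "sets M = sets (restrict_space borel S)"
    and "continuous_on S h" and "bounded (h ` S)"
  shows "integrable M h"
proof -
  obtain B where B: "\<forall>x\<in>S. \<bar>h x\<bar> \<le> B"
    using \<open>bounded (h ` S)\<close> by (auto simp: bounded_real)
  have "h \<in> borel_measurable M"
    using borel_measurable_continuous_on_restrict[OF \<open>continuous_on S h\<close>]
      measurable_cong_sets[OF sets_M refl] by blast
  moreover have "space M = S"
    using sets_eq_imp_space_eq[OF sets_M] by (simp add: space_restrict_space)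
  ultimately show ?thesis
    using B by (intro finite_measure.integrable_const_bound[OF \<open>finite_measure M\<close>]) auto
qed

lemma weak_duality_integral_bound:
  fixes \<mu> \<theta> :: real
  assumes "prob_space \<gamma>" "finite_measure \<xi>" "space \<gamma> = G" "space \<xi> = G"
    and "integrable \<gamma> k" "integrable \<gamma> a" "integrable \<gamma> b" "integrable \<xi> c"
    and "\<forall>x\<in>G. \<mu> \<le> k x + a x + b x" and "\<forall>x\<in>G. - \<theta> \<le> c x"
    and "integral\<^sup>L \<gamma> b = 0" and "integral\<^sup>L \<gamma> a + integral\<^sup>L \<xi> c = 0"
  shows "\<mu> \<le> integral\<^sup>L \<gamma> k + \<theta> * measure \<xi> G"
proof -
  have "\<mu> \<le> (\<integral>x. k x + a x + b x \<partial>\<gamma>)"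
    using assms by (intro prob_space.integral_ge_const) auto
  also have "\<dots> = integral\<^sup>L \<gamma> k + integral\<^sup>L \<gamma> a + integral\<^sup>L \<gamma> b"
    using assms by simp
  finally have "\<mu> \<le> integral\<^sup>L \<gamma> k - integral\<^sup>L \<xi> c"
    using assms by linarith
  moreover have "- \<theta> * measure \<xi> G \<le> integral\<^sup>L \<xi> c"
  proof -
    have "(\<integral>x. - \<theta> \<partial>\<xi>) \<le> integral\<^sup>L \<xi> c"
      using assms by (intro integral_mono) (auto intro: finite_measure.integrable_const)
    then show ?thesis
      using \<open>space \<xi> = G\<close> by (simp add: mult.commute)
  qed
  ultimately show ?thesis
    by linarith
qed

lemma integrable_Gset_transition:
  fixes Y :: "'a::euclidean_space set" and U :: "'a \<Rightarrow> 'b::metric_space set"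
    and h :: "'a \<Rightarrow> 'a \<Rightarrow> real"
  assumes "compact Y" and "\<forall>y\<in>Y. U y \<subseteq> U0" and "continuous_on (UNIV \<times> U0) f"
    and "continuous_on (Y \<times> Y) (\<lambda>(z, y). h z y)"
    and "finite_measure M" and "sets M = sets (restrict_space borel (Gset Y U f))"
  shows "integrable M (\<lambda>(y, u). h (f (y, u)) y)"
proof -
  let ?G = "Gset Y U f" and ?g = "\<lambda>x. (f x, fst x)"
  have G_sub: "?G \<subseteq> Y \<times> U0" and g_G: "?g ` ?G \<subseteq> Y \<times> Y"
    using assms(2) by (auto simp: Gset_def Aset_def)
  have "continuous_on ?G f"
    using continuous_on_subset[OF assms(3)] G_sub by blast
  then have "continuous_on ?G ?g"
    by (intro continuous_intros)
  then have "continuous_on ?G (\<lambda>x. (\<lambda>(z, y). h z y) (?g x))"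
    using continuous_on_compose2[OF assms(4) _ g_G] by blast
  moreover have "bounded ((\<lambda>(z, y). h z y) ` ?g ` ?G)"
  proof (rule bounded_subset)
    show "bounded ((\<lambda>(z, y). h z y) ` (Y \<times> Y))"
      using compact_continuous_image[OF assms(4)] compact_Times[OF \<open>compact Y\<close> \<open>compact Y\<close>]
      by (simp add: compact_imp_bounded)
  qed (use g_G in blast)
  ultimately show ?thesis
    using integrable_continuous_on_bounded[OF assms(5,6)]
    by (simp add: image_image case_prod_beta)
qed

lemma dual_value_le_primal_value:
  fixes Y :: "'a::euclidean_space set" and U :: "'a \<Rightarrow> 'b::metric_space set" and \<mu> \<theta> :: real
  assumes "compact Y" "compact U0" "\<forall>y\<in>Y. U y \<subseteq> U0"
    and "continuous_on (UNIV \<times> U0) f" "continuous_on (UNIV \<times> U0) k"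
    and "continuous_on Y \<psi>" "continuous_on Y \<eta>"
    and feasible: "\<forall>(y, u) \<in> Gset Y U f.
       k (y, u) + \<psi> y0 - \<psi> y + \<eta> (f (y, u)) - \<eta> y - \<mu> \<ge> 0 \<and> \<psi> (f (y, u)) - \<psi> y \<ge> - \<theta>"
    and "(\<gamma>, \<xi>) \<in> Omega Y U f y0"
  shows "\<mu> \<le> integral\<^sup>L \<gamma> k + \<theta> * measure \<xi> (Gset Y U f)"
proof -
  let ?G = "Gset Y U f"
  have \<gamma>: "prob_space \<gamma>" "sets \<gamma> = sets (restrict_space borel ?G)"
    and \<xi>: "finite_measure \<xi>" "sets \<xi> = sets (restrict_space borel ?G)"
    and invariant: "integral\<^sup>L \<gamma> (\<lambda>(y, u). \<eta> (f (y, u)) - \<eta> y) = 0"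
    and occupation: "integral\<^sup>L \<gamma> (\<lambda>(y, u). \<psi> y0 - \<psi> y)
                     + integral\<^sup>L \<xi> (\<lambda>(y, u). \<psi> (f (y, u)) - \<psi> y) = 0"
    using \<open>(\<gamma>, \<xi>) \<in> Omega Y U f y0\<close> \<open>continuous_on Y \<psi>\<close> \<open>continuous_on Y \<eta>\<close>
    unfolding Omega_def Wset_def borel_prob_on_def borel_finite_on_def by blast+
  have \<gamma>_finite: "finite_measure \<gamma>"
    using \<gamma>(1) by (simp add: prob_space_def)
  have spaces: "space \<gamma> = ?G" "space \<xi> = ?G"
    using sets_eq_imp_space_eq[OF \<gamma>(2)] sets_eq_imp_space_eq[OF \<xi>(2)]
    by (simp_all add: space_restrict_space)
  have cont_\<psi>: "continuous_on (Y \<times> Y) (\<lambda>(z, y). \<psi> z - \<psi> y)"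
    and cont_\<psi>0: "continuous_on (Y \<times> Y) (\<lambda>(z, y). \<psi> y0 - \<psi> y)"
    and cont_\<eta>: "continuous_on (Y \<times> Y) (\<lambda>(z, y). \<eta> z - \<eta> y)"
    using \<open>continuous_on Y \<psi>\<close> \<open>continuous_on Y \<eta>\<close> unfolding case_prod_beta
    by (auto intro!: continuous_intros continuous_on_compose2[of Y] simp: mem_Times_iff)
  have "integrable \<gamma> k"
  proof (rule integrable_continuous_on_bounded[OF \<gamma>_finite \<gamma>(2)])
    have G_sub: "?G \<subseteq> Y \<times> U0"
      using assms(3) by (auto simp: Gset_def Aset_def)
    have "continuous_on (Y \<times> U0) k"
by (rule continuous_on_subset[OF assms(5)]) auto
    then show "continuous_on ?G k" and "bounded (k ` ?G)"
      using G_sub compact_Times[OF assms(1,2)]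
      by (auto intro: continuous_on_subset bounded_subset[OF compact_imp_bounded]
               dest: compact_continuous_image)
  qed
  show ?thesis
    by (rule weak_duality_integral_bound[OF \<gamma>(1) \<xi>(1) spaces \<open>integrable \<gamma> k\<close>
        integrable_Gset_transition[OF assms(1,3,4) cont_\<psi>0 \<gamma>_finite \<gamma>(2)]
        integrable_Gset_transition[OF assms(1,3,4) cont_\<eta> \<gamma>_finite \<gamma>(2)]
        integrable_Gset_transition[OF assms(1,3,4) cont_\<psi> \<xi>] _ _ invariant occupation])
      (use feasible in fastforce)+
qed

lemma dstar_le_kstar:
  fixes Y :: "'a::euclidean_space set" and U :: "'a \<Rightarrow> 'b::metric_space set"
  assumes "compact Y" "compact U0" "\<forall>y\<in>Y. U y \<subseteq> U0"
    and "continuous_on (UNIV \<times> U0) f" "continuous_on (UNIV \<times> U0) k"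
  shows "dstar Y U f k \<theta> y0 \<le> kstar Y U f k \<theta> y0"
  unfolding dstar_def kstar_def
  by (intro Sup_least INF_greatest) (force dest: dual_value_le_primal_value[OF assms])

lemma dbarstar_eq_dstar: "dbarstar Y U f k \<theta> y0 = dstar Y U f k \<theta> y0"
  unfolding dbarstar_def dstar_def
proof (intro arg_cong[where f = Sup] equalityI subsetI; elim CollectE exE conjE)
  fix z \<psi> \<eta>
  assume "z = ereal (\<psi> y0)" "continuous_on Y \<psi>" "continuous_on Y \<eta>"
    and "\<forall>(y, u) \<in> Gset Y U f. k (y, u) - \<psi> y + \<eta> (f (y, u)) - \<eta> y \<ge> 0 \<and>
       \<psi> (f (y, u)) - \<psi> y \<ge> - \<theta>"
  then show "z \<in> {ereal \<mu> | \<mu>. \<exists>\<psi> \<eta>. continuous_on Y \<psi> \<and> continuous_on Y \<eta> \<and>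
      (\<forall>(y, u) \<in> Gset Y U f. k (y, u) + \<psi> y0 - \<psi> y + \<eta> (f (y, u)) - \<eta> y - \<mu> \<ge> 0 \<and>
         \<psi> (f (y, u)) - \<psi> y \<ge> - \<theta>)}"
    by fastforce
next
  fix z \<mu> \<psi> \<eta>
  assume "z = ereal \<mu>" "continuous_on Y \<psi>" "continuous_on Y \<eta>"
    and "\<forall>(y, u) \<in> Gset Y U f. k (y, u) + \<psi> y0 - \<psi> y + \<eta> (f (y, u)) - \<eta> y - \<mu> \<ge> 0 \<and>
       \<psi> (f (y, u)) - \<psi> y \<ge> - \<theta>"
  moreover have "continuous_on Y (\<lambda>y. \<psi> y - \<psi> y0 + \<mu>)"
    using \<open>continuous_on Y \<psi>\<close> by (intro continuous_intros)
  ultimately show "z \<in> {ereal (\<psi> y0) | \<psi>. \<exists>\<eta>. continuous_on Y \<psi> \<and> continuous_on Y \<eta> \<and>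
      (\<forall>(y, u) \<in> Gset Y U f. k (y, u) - \<psi> y + \<eta> (f (y, u)) - \<eta> y \<ge> 0 \<and>
         \<psi> (f (y, u)) - \<psi> y \<ge> - \<theta>)}"
    by (intro CollectI exI[of _ "\<lambda>y. \<psi> y - \<psi> y0 + \<mu>"] exI[of _ \<eta>]) fastforce
qed

theorem lemma5p3:
  fixes Y :: "'a::euclidean_space set"
    and U0 :: "'b::metric_space set"
    and U :: "'a \<Rightarrow> 'b set"
    and f :: "'a \<times> 'b \<Rightarrow> 'a"
    and k :: "'a \<times> 'b \<Rightarrow> real"
    and y0 :: 'a and \<theta> :: real
  assumes "compact Y" and "Y \<noteq> {}"
    and "compact U0"
    and "\<forall>y\<in>Y. U y \<subseteq> U0 \<and> compact (U y)"
    and "usc_setvalued_on Y U"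
    and "continuous_on (UNIV \<times> U0) f"
    and "continuous_on (UNIV \<times> U0) k"
    and "\<forall>y\<in>Y. Aset Y U f y \<noteq> {}"
    and "y0 \<in> Y" and "\<theta> \<ge> 0"
  shows "dbarstar Y U f k \<theta> y0 = dstar Y U f k \<theta> y0 \<and> dstar Y U f k \<theta> y0 \<le> kstar Y U f k \<theta> y0"
  using dbarstar_eq_dstar dstar_le_kstar[OF assms(1,3) _ assms(6,7)] assms(4) by blast

end
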